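(* Let $G$ and $H$ be cyclically orderable graphs with $|V(G)|=|V(H)|$ and $|E(G)|=|E(H)|$. Then for any $u\in V(G)$ and $v\in V(H)$, the series composition $G\oplus H$ obtained by gluing $u$ and $v$ is cyclically orderable.
   Context: A cyclic base ordering (CBO) of a connected graph $G$ is a bijection $\mathcal{O}:E(G)\to\{1,\dots,|E(G)|\}$ such that for every $i\in\{1,\dots,|E(G)|\}$ the edges $\mathcal{O}^{-1}(i),\dots,\mathcal{O}^{-1}(i+|V(G)|-2)$ (indices taken cyclically modulo $|E(G)|$) induce a spanning tree of $G$; $G$ is cyclically orderable if it has a CBO. Given graphs $G$ and $H$ (vertex-disjoint) with $u\in V(G)$ and $v\in V(H)$, the series composition (1-sum) $G\oplus H$ is the graph obtained from the disjoint union of $G$ and $H$ by identifying $u$ and $v$ into a single vertex. *)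

theory Defs
  imports Main
begin

text \<open>A (finite multi)graph is given by a vertex set V, an edge set E and an
incidence map inc assigning to each edge its set of endpoints (one endpoint for
a loop, two otherwise). Parallel edges are allowed since edges are abstract.\<close>

definition graph :: "'v set \<Rightarrow> 'e set \<Rightarrow> ('e \<Rightarrow> 'v set) \<Rightarrow> bool" where
  "graph V E inc \<longleftrightarrow> finite V \<and> finite E \<and>
     (\<forall>e\<in>E. inc e \<subseteq> V \<and> 1 \<le> card (inc e) \<and> card (inc e) \<le> 2)"

definition adj :: "'e set \<Rightarrow> ('e \<Rightarrow> 'v set) \<Rightarrow> ('v \<times> 'v) set" where
  "adj F inc = {(x, y). \<exists>e\<in>F. x \<in> inc e \<and> y \<in> inc e}"

definition connected_on :: "'v set \<Rightarrow> 'e set \<Rightarrow> ('e \<Rightarrow> 'v set) \<Rightarrow> bool" where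
  "connected_on V F inc \<longleftrightarrow> V \<noteq> {} \<and> (\<forall>x\<in>V. \<forall>y\<in>V. (x, y) \<in> (adj F inc)\<^sup>*)"

definition spanning_tree :: "'v set \<Rightarrow> 'e set \<Rightarrow> ('e \<Rightarrow> 'v set) \<Rightarrow> 'e set \<Rightarrow> bool" where
  "spanning_tree V E inc F \<longleftrightarrow> F \<subseteq> E \<and> connected_on V F inc \<and>
     (\<forall>e\<in>F. \<not> connected_on V (F - {e}) inc)"

definition window :: "'e set \<Rightarrow> ('e \<Rightarrow> nat) \<Rightarrow> nat \<Rightarrow> nat \<Rightarrow> 'e set" where
  "window E ord i k = {e\<in>E. \<exists>j<k. ord e = ((i - 1 + j) mod card E) + 1}"

definition CBO :: "'v set \<Rightarrow> 'e set \<Rightarrow> ('e \<Rightarrow> 'v set) \<Rightarrow> ('e \<Rightarrow> nat) \<Rightarrow> bool" where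
  "CBO V E inc ord \<longleftrightarrow> bij_betw ord E {1..card E} \<and>
     (\<forall>i\<in>{1..card E}. spanning_tree V E inc (window E ord i (card V - 1)))"

definition cyclically_orderable :: "'v set \<Rightarrow> 'e set \<Rightarrow> ('e \<Rightarrow> 'v set) \<Rightarrow> bool" where
  "cyclically_orderable V E inc \<longleftrightarrow> connected_on V E inc \<and> (\<exists>ord. CBO V E inc ord)"

text \<open>Series composition (1-sum): disjoint union of G and H with u and v identified
(the identified vertex is represented by Inl u).\<close>
definition glue_vtx :: "'v \<Rightarrow> 'w \<Rightarrow> 'w \<Rightarrow> 'v + 'w" where
  "glue_vtx u v y = (if y = v then Inl u else Inr y)"

definition sc_V :: "'v set \<Rightarrow> 'w set \<Rightarrow> 'v \<Rightarrow> 'w \<Rightarrow> ('v + 'w) set" where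
  "sc_V VG VH u v = Inl ` VG \<union> glue_vtx u v ` VH"

definition sc_E :: "'e set \<Rightarrow> 'f set \<Rightarrow> ('e + 'f) set" where
  "sc_E EG EH = Inl ` EG \<union> Inr ` EH"

definition sc_inc :: "('e \<Rightarrow> 'v set) \<Rightarrow> ('f \<Rightarrow> 'w set) \<Rightarrow> 'v \<Rightarrow> 'w \<Rightarrow> 'e + 'f \<Rightarrow> ('v + 'w) set" where
  "sc_inc incG incH u v x = (case x of Inl e \<Rightarrow> Inl ` incG e | Inr f \<Rightarrow> glue_vtx u v ` incH f)"

end

theory Submission
  imports Defs
begin

text \<open>Give the edges of G the odd positions and the edges of H the even positions,
keeping each cyclic order: e in G gets position 2 ordG(e) - 1, f in H gets 2 ordH(f).
Since G \<oplus> H has 2n - 1 vertices and 2m edges, a window of 2(n - 1) consecutive positions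
consists of n - 1 cyclically consecutive edges of G and n - 1 of H, i.e. of a spanning tree
of G and a spanning tree of H. Glued at a single vertex these form a spanning tree of
G \<oplus> H, because connectivity of a spanning subgraph of G \<oplus> H is equivalent to
connectivity of its two halves.\<close>

lemma rtrancl_adj_map:
  assumes "(x, y) \<in> (adj F inc)\<^sup>*"
    and "\<And>e x y. e \<in> F \<Longrightarrow> x \<in> inc e \<Longrightarrow> y \<in> inc e \<Longrightarrow> (f x, f y) \<in> (adj F' inc')\<^sup>="
  shows "(f x, f y) \<in> (adj F' inc')\<^sup>*"
  using assms(1)
proof (induction rule: rtrancl_induct)
  case (step y z)
  then have "(f y, f z) \<in> (adj F' inc')\<^sup>="
    using assms(2) unfolding adj_def by blast
  with step.IH show ?case by auto
qed simp

lemma rtrancl_adj_sc_Inl: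
  assumes "(x, y) \<in> (adj A incG)\<^sup>*"
  shows "(Inl x, Inl y) \<in> (adj (Inl ` A \<union> Inr ` B) (sc_inc incG incH u v))\<^sup>*"
  using assms by (rule rtrancl_adj_map) (force simp: adj_def sc_inc_def)

lemma rtrancl_adj_sc_glue_vtx:
  assumes "(x, y) \<in> (adj B incH)\<^sup>*"
  shows "(glue_vtx u v x, glue_vtx u v y) \<in> (adj (Inl ` A \<union> Inr ` B) (sc_inc incG incH u v))\<^sup>*"
  using assms by (rule rtrancl_adj_map) (force simp: adj_def sc_inc_def)

lemma rtrancl_adj_sc_collapse_H:
  assumes "(a, b) \<in> (adj (Inl ` A \<union> Inr ` B) (sc_inc incG incH u v))\<^sup>*"
  shows "(case_sum id (\<lambda>_. u) a, case_sum id (\<lambda>_. u) b) \<in> (adj A incG)\<^sup>*"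
  using assms
  by (rule rtrancl_adj_map) (force simp: adj_def sc_inc_def glue_vtx_def split: sum.splits)

lemma rtrancl_adj_sc_collapse_G:
  assumes "(a, b) \<in> (adj (Inl ` A \<union> Inr ` B) (sc_inc incG incH u v))\<^sup>*"
  shows "(case_sum (\<lambda>_. v) id a, case_sum (\<lambda>_. v) id b) \<in> (adj B incH)\<^sup>*"
  using assms
  by (rule rtrancl_adj_map) (force simp: adj_def sc_inc_def glue_vtx_def split: sum.splits)

lemma glue_vtx_inverse: "case_sum (\<lambda>_. v) id (glue_vtx u v y) = y"
  by (simp add: glue_vtx_def)

lemma connected_on_sc_iff:
  assumes "u \<in> VG" and "v \<in> VH"
  shows "connected_on (sc_V VG VH u v) (Inl ` A \<union> Inr ` B) (sc_inc incG incH u v)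
    \<longleftrightarrow> connected_on VG A incG \<and> connected_on VH B incH"
    (is "connected_on ?V ?F ?inc \<longleftrightarrow> _")
proof
  let ?R = "(adj ?F ?inc)\<^sup>*"
  assume conn: "connected_on ?V ?F ?inc"
  have "(x, y) \<in> (adj A incG)\<^sup>*" if "x \<in> VG" "y \<in> VG" for x y
  proof -
    have "(Inl x, Inl y) \<in> ?R"
      using conn that unfolding connected_on_def sc_V_def by blast
    then show ?thesis
      using rtrancl_adj_sc_collapse_H by fastforce
  qed
  moreover have "(x, y) \<in> (adj B incH)\<^sup>*" if "x \<in> VH" "y \<in> VH" for x y
  proof -
    have "(glue_vtx u v x, glue_vtx u v y) \<in> ?R"
      using conn that unfolding connected_on_def sc_V_def by blast
    then show ?thesis
      using rtrancl_adj_sc_collapse_G by (fastforce simp: glue_vtx_inverse)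
  qed
  ultimately show "connected_on VG A incG \<and> connected_on VH B incH"
    using assms unfolding connected_on_def by blast
next
  let ?R = "(adj ?F ?inc)\<^sup>*"
  assume conn: "connected_on VG A incG \<and> connected_on VH B incH"
  have "(Inl x, Inl u) \<in> ?R \<and> (Inl u, Inl x) \<in> ?R" if "x \<in> VG" for x
  proof -
    have "(x, u) \<in> (adj A incG)\<^sup>*" "(u, x) \<in> (adj A incG)\<^sup>*"
      using conn that assms unfolding connected_on_def by blast+
    then show ?thesis
      by (simp add: rtrancl_adj_sc_Inl)
  qed
  moreover have "(glue_vtx u v y, Inl u) \<in> ?R \<and> (Inl u, glue_vtx u v y) \<in> ?R" if "y \<in> VH" for y
  proof -
    have "(y, v) \<in> (adj B incH)\<^sup>*" "(v, y) \<in> (adj B incH)\<^sup>*"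
      using conn that assms unfolding connected_on_def by blast+
    then have "(glue_vtx u v y, glue_vtx u v v) \<in> ?R" "(glue_vtx u v v, glue_vtx u v y) \<in> ?R"
      by (simp_all add: rtrancl_adj_sc_glue_vtx)
    then show ?thesis
      by (simp add: glue_vtx_def)
  qed
  ultimately have "(x, Inl u) \<in> ?R \<and> (Inl u, x) \<in> ?R" if "x \<in> ?V" for x
    using that unfolding sc_V_def by blast
  then show "connected_on ?V ?F ?inc"
    using assms unfolding connected_on_def sc_V_def by (blast intro: rtrancl_trans)
qed

lemma spanning_tree_sc:
  assumes G: "spanning_tree VG EG incG TG" and H: "spanning_tree VH EH incH TH"
    and "u \<in> VG" and "v \<in> VH"
  shows "spanning_tree (sc_V VG VH u v) (sc_E EG EH) (sc_inc incG incH u v) (Inl ` TG \<union> Inr ` TH)"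
  unfolding spanning_tree_def
proof (intro conjI ballI)
  show "Inl ` TG \<union> Inr ` TH \<subseteq> sc_E EG EH"
    using G H unfolding spanning_tree_def sc_E_def by blast
  show "connected_on (sc_V VG VH u v) (Inl ` TG \<union> Inr ` TH) (sc_inc incG incH u v)"
    using G H unfolding spanning_tree_def connected_on_sc_iff[OF assms(3,4)] by blast
  fix x
  assume "x \<in> Inl ` TG \<union> Inr ` TH"
  then consider e where "e \<in> TG" "x = Inl e" | f where "f \<in> TH" "x = Inr f"
    by blast
  then show "\<not> connected_on (sc_V VG VH u v) (Inl ` TG \<union> Inr ` TH - {x}) (sc_inc incG incH u v)"
  proof cases
    case 1
    then have eq: "Inl ` TG \<union> Inr ` TH - {x} = Inl ` (TG - {e}) \<union> Inr ` TH"
      by blast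
    have "\<not> connected_on VG (TG - {e}) incG"
      using G 1 unfolding spanning_tree_def by blast
    then show ?thesis
      unfolding eq connected_on_sc_iff[OF assms(3,4)] by blast
  next
    case 2
    then have eq: "Inl ` TG \<union> Inr ` TH - {x} = Inl ` TG \<union> Inr ` (TH - {f})"
      by blast
    have "\<not> connected_on VH (TH - {f}) incH"
      using H 2 unfolding spanning_tree_def by blast
    then show ?thesis
      unfolding eq connected_on_sc_iff[OF assms(3,4)] by blast
  qed
qed

lemma card_sc_E:
  assumes "finite EG" and "finite EH"
  shows "card (sc_E EG EH) = card EG + card EH"
  unfolding sc_E_def using assms
  by (subst card_Un_disjoint) (auto simp: card_image)

lemma card_sc_V:
  assumes "finite VG" and "finite VH" and "u \<in> VG" and "v \<in> VH"
  shows "card (sc_V VG VH u v) = card VG + card VH - 1"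
proof -
  have "sc_V VG VH u v = Inl ` VG \<union> Inr ` (VH - {v})"
    using assms(3) unfolding sc_V_def glue_vtx_def by auto
  moreover have "card (Inl ` VG \<union> Inr ` (VH - {v})) = card VG + card (VH - {v})"
    using assms(1,2) by (subst card_Un_disjoint) (auto simp: card_image)
  moreover have "card VH > 0"
    using assms(2,4) card_gt_0_iff by blast
  ultimately show ?thesis
    using assms(2,4) by (simp add: card_Diff_singleton)
qed

definition interleave :: "('e \<Rightarrow> nat) \<Rightarrow> ('f \<Rightarrow> nat) \<Rightarrow> 'e + 'f \<Rightarrow> nat" where
  "interleave ordG ordH x = (case x of Inl e \<Rightarrow> 2 * ordG e - 1 | Inr f \<Rightarrow> 2 * ordH f)"

lemma bij_betw_interleave:
  assumes "bij_betw ordG EG {1..m}" and "bij_betw ordH EH {1..m}"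
  shows "bij_betw (interleave ordG ordH) (sc_E EG EH) {1..2*m}"
proof -
  have "bij_betw ((\<lambda>p. 2 * p - 1) \<circ> ordG) EG ((\<lambda>p. 2 * p - 1) ` {1..m})"
    by (rule bij_betw_trans[OF assms(1)]) (auto simp: bij_betw_def inj_on_def)
  then have odd: "bij_betw (interleave ordG ordH) (Inl ` EG) ((\<lambda>p. 2 * p - 1) ` {1..m})"
    by (subst bij_betw_comp_iff[of Inl]) (auto simp: bij_betw_def interleave_def comp_def)
  have "bij_betw ((\<lambda>p. 2 * p) \<circ> ordH) EH ((\<lambda>p. 2 * p) ` {1..m})"
    by (rule bij_betw_trans[OF assms(2)]) (auto simp: bij_betw_def inj_on_def)
  then have even: "bij_betw (interleave ordG ordH) (Inr ` EH) ((\<lambda>p. 2 * p) ` {1..m})"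
    by (subst bij_betw_comp_iff[of Inr]) (auto simp: bij_betw_def interleave_def comp_def)
  have "(\<lambda>p. 2 * p - 1) ` {1..m} \<inter> (\<lambda>p. 2 * p) ` {1..m} = {}"
    by auto presburger
  moreover have "(\<lambda>p. 2 * p - 1) ` {1..m} \<union> (\<lambda>p::nat. 2 * p) ` {1..m} = {1..2*m}"
  proof (intro equalityI subsetI)
    fix x :: nat
    assume "x \<in> {1..2*m}"
    then show "x \<in> (\<lambda>p. 2 * p - 1) ` {1..m} \<union> (\<lambda>p. 2 * p) ` {1..m}"
      by (cases "even x") (auto intro!: image_eqI[where x = "(x + 1) div 2"] elim!: oddE)
  qed auto
  ultimately show ?thesis
    using bij_betw_combine[OF odd even] unfolding sc_E_def by simp
qed

lemma window_mod_card: "window E ord ((i - 1) mod card E + 1) k = window E ord i k"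
  unfolding window_def by (simp add: mod_add_left_eq)

lemma CBO_window_spanning_tree:
  assumes "CBO V E inc ord" and "card E > 0"
  shows "spanning_tree V E inc (window E ord i (card V - 1))"
proof -
  have "(i - 1) mod card E + 1 \<in> {1..card E}"
    using assms(2) by (simp add: Suc_leI)
  then have "spanning_tree V E inc (window E ord ((i - 1) mod card E + 1) (card V - 1))"
    using assms(1) unfolding CBO_def by blast
  then show ?thesis
    by (simp only: window_mod_card)
qed

lemma double_add_mod_double:
  fixes x m c :: nat
  assumes "c < 2"
  shows "(2 * x + c) mod (2 * m) = 2 * (x mod m) + c"
proof -
  have "(2 * x + c) mod (2 * m) = 2 * ((2 * x + c) div 2 mod m) + (2 * x + c) mod 2"
    by (rule mod_mult2_eq)
  moreover have "(2 * x + c) div 2 = x" and "(2 * x + c) mod 2 = c"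
    using assms by presburger+
  ultimately show ?thesis
    by simp
qed

lemma double_mod_window_iff:
  fixes m c p a k :: nat
  assumes "c < 2"
  shows "(\<exists>j<2 * k. 2 * p + c = (a + j) mod (2 * m)) \<longleftrightarrow> (\<exists>j<k. p = ((a + 1 - c) div 2 + j) mod m)"
proof -
  define t where "t = (a + 1 - c) div 2"
  \<comment> \<open>2 t + c is the least number of parity c that is at least a\<close>
  have "2 * t \<le> a + 1 - c" "a + 1 - c \<le> 2 * t + 1"
    unfolding t_def by simp_all
  then have t: "a \<le> 2 * t + c" "2 * t + c \<le> a + 1"
    using assms by linarith+
  have "(\<exists>j<2 * k. 2 * p + c = (a + j) mod (2 * m))
      \<longleftrightarrow> (\<exists>j<k. 2 * p + c = (2 * (t + j) + c) mod (2 * m))"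
  proof
    assume "\<exists>j<2 * k. 2 * p + c = (a + j) mod (2 * m)"
    then obtain j where j: "j < 2 * k" "2 * p + c = (a + j) mod (2 * m)"
      by blast
    have "(a + j) mod 2 = (2 * p + c) mod 2"
      unfolding j(2) by (simp add: mod_mod_cancel)
    then obtain r where r: "a + j = 2 * r + c"
      using assms by (metis add.commute mod_mult_self2 mod_less mult_div_mod_eq)
    have "t \<le> r"
      using t r by linarith
    moreover have "r - t < k"
      using t r j(1) by linarith
    ultimately show "\<exists>j<k. 2 * p + c = (2 * (t + j) + c) mod (2 * m)"
      using j(2) r by (metis le_add_diff_inverse)
  next
    assume "\<exists>j<k. 2 * p + c = (2 * (t + j) + c) mod (2 * m)"
    then obtain j where j: "j < k" "2 * p + c = (2 * (t + j) + c) mod (2 * m)"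
      by blast
    have "2 * (t + j) + c = a + (2 * (t + j) + c - a)" and "2 * (t + j) + c - a < 2 * k"
      using t j(1) by simp_all
    then show "\<exists>j<2 * k. 2 * p + c = (a + j) mod (2 * m)"
      using j(2) by metis
  qed
  also have "\<dots> \<longleftrightarrow> (\<exists>j<k. p = (t + j) mod m)"
    by (simp only: double_add_mod_double[OF assms]) simp
  finally show ?thesis
    unfolding t_def .
qed

text \<open>The first odd position at or after i is 2 (i div 2 + 1) - 1 and the first even one
is 2 ((i + 1) div 2).\<close>

lemma window_interleave:
  assumes G: "bij_betw ordG EG {1..m}" and H: "bij_betw ordH EH {1..m}"
  shows "window (sc_E EG EH) (interleave ordG ordH) i (2 * k)
    = Inl ` window EG ordG (i div 2 + 1) k \<union> Inr ` window EH ordH ((i + 1) div 2) k"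
proof -
  have fin: "finite EG" "finite EH"
    using G H bij_betw_finite by blast+
  have card: "card EG = m" "card EH = m" "card (sc_E EG EH) = 2 * m"
    using bij_betw_same_card[OF G] bij_betw_same_card[OF H] card_sc_E[OF fin] by simp_all
  have half: "(i - 1 + 1) div 2 = i div 2" "(i + 1) div 2 - 1 = (i - 1) div 2"
    by (cases i; simp)+
  have Inl_mem: "Inl e \<in> window (sc_E EG EH) (interleave ordG ordH) i (2 * k)
      \<longleftrightarrow> e \<in> window EG ordG (i div 2 + 1) k" for e
  proof (cases "e \<in> EG")
    case True
    with G have "ordG e \<in> {1..m}"
      by (rule bij_betw_apply)
    then have "(\<exists>j<2 * k. 2 * ordG e - 1 = (i - 1 + j) mod (2 * m) + 1)
        \<longleftrightarrow> (\<exists>j<2 * k. 2 * (ordG e - 1) + 0 = (i - 1 + j) mod (2 * m))"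
      and "(\<exists>j<k. ordG e = (i div 2 + 1 - 1 + j) mod m + 1)
        \<longleftrightarrow> (\<exists>j<k. ordG e - 1 = ((i - 1 + 1 - 0) div 2 + j) mod m)"
      using half(1) by auto
    then show ?thesis
      using True double_mod_window_iff[of 0 k "ordG e - 1" "i - 1" m] card
      by (simp add: window_def sc_E_def interleave_def)
  qed (auto simp: window_def sc_E_def)
  have Inr_mem: "Inr f \<in> window (sc_E EG EH) (interleave ordG ordH) i (2 * k)
      \<longleftrightarrow> f \<in> window EH ordH ((i + 1) div 2) k" for f
  proof (cases "f \<in> EH")
    case True
    with H have "ordH f \<in> {1..m}"
      by (rule bij_betw_apply)
    then have "(\<exists>j<2 * k. 2 * ordH f = (i - 1 + j) mod (2 * m) + 1)
        \<longleftrightarrow> (\<exists>j<2 * k. 2 * (ordH f - 1) + 1 = (i - 1 + j) mod (2 * m))"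
      and "(\<exists>j<k. ordH f = ((i + 1) div 2 - 1 + j) mod m + 1)
        \<longleftrightarrow> (\<exists>j<k. ordH f - 1 = ((i - 1 + 1 - 1) div 2 + j) mod m)"
      using half(2) by auto
    then show ?thesis
      using True double_mod_window_iff[of 1 k "ordH f - 1" "i - 1" m] card
      by (simp add: window_def sc_E_def interleave_def)
  qed (auto simp: window_def sc_E_def)
  show ?thesis
  proof (rule set_eqI)
    fix x
    show "x \<in> window (sc_E EG EH) (interleave ordG ordH) i (2 * k)
      \<longleftrightarrow> x \<in> Inl ` window EG ordG (i div 2 + 1) k \<union> Inr ` window EH ordH ((i + 1) div 2) k"
      using Inl_mem Inr_mem by (cases x) auto
  qed
qed

lemma CBO_sc_interleave:
  assumes G: "CBO VG EG incG ordG" and H: "CBO VH EH incH ordH"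
    and "finite VG" and "finite VH" and "card VG = card VH" and "card EG = card EH"
    and "u \<in> VG" and "v \<in> VH"
  shows "CBO (sc_V VG VH u v) (sc_E EG EH) (sc_inc incG incH u v) (interleave ordG ordH)"
proof -
  let ?V = "sc_V VG VH u v" and ?E = "sc_E EG EH" and ?inc = "sc_inc incG incH u v"
  define m where "m = card EG"
  have bijG: "bij_betw ordG EG {1..m}" and bijH: "bij_betw ordH EH {1..m}"
    using G H assms(6) unfolding CBO_def m_def by simp_all
  have "finite EG" "finite EH"
    using bijG bijH bij_betw_finite by blast+
  then have card_E: "card ?E = 2 * m"
    using card_sc_E[of EG EH] assms(6) m_def by simp
  have card_V: "card ?V - 1 = 2 * (card VG - 1)"
    using card_sc_V[OF assms(3,4,7,8)] assms(5) by simp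
  have "spanning_tree ?V ?E ?inc (window ?E (interleave ordG ordH) i (card ?V - 1))"
    if "i \<in> {1..card ?E}" for i
  proof -
    have "0 < m"
      using that card_E by simp
    have "spanning_tree VG EG incG (window EG ordG (i div 2 + 1) (card VG - 1))"
      using CBO_window_spanning_tree[OF G] \<open>0 < m\<close> m_def by simp
    moreover have "spanning_tree VH EH incH (window EH ordH ((i + 1) div 2) (card VG - 1))"
      using CBO_window_spanning_tree[OF H] \<open>0 < m\<close> m_def assms(5,6) by simp
    ultimately show ?thesis
      unfolding card_V window_interleave[OF bijG bijH]
      using assms(7,8) by (rule spanning_tree_sc)
  qed
  then show ?thesis
    unfolding CBO_def card_E using bij_betw_interleave[OF bijG bijH] by blast
qed

theorem mainTheorem3:
  fixes VG :: "'v set" and EG :: "'e set" and incG :: "'e \<Rightarrow> 'v set"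
    and VH :: "'w set" and EH :: "'f set" and incH :: "'f \<Rightarrow> 'w set"
    and u :: 'v and v :: 'w
  assumes "graph VG EG incG" and "graph VH EH incH"
    and "cyclically_orderable VG EG incG" and "cyclically_orderable VH EH incH"
    and "card VG = card VH" and "card EG = card EH"
    and "u \<in> VG" and "v \<in> VH"
  shows "cyclically_orderable (sc_V VG VH u v) (sc_E EG EH) (sc_inc incG incH u v)"
proof -
  obtain ordG ordH where G: "CBO VG EG incG ordG" "connected_on VG EG incG"
    and H: "CBO VH EH incH ordH" "connected_on VH EH incH"
    using assms(3,4) unfolding cyclically_orderable_def by blast
  have "finite VG" "finite VH"
    using assms(1,2) unfolding graph_def by simp_all
  then have "CBO (sc_V VG VH u v) (sc_E EG EH) (sc_inc incG incH u v) (interleave ordG ordH)"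
    by (rule CBO_sc_interleave[OF G(1) H(1) _ _ assms(5-8)])
  moreover have "connected_on (sc_V VG VH u v) (sc_E EG EH) (sc_inc incG incH u v)"
    unfolding sc_E_def using G(2) H(2) connected_on_sc_iff[OF assms(7,8)] by blast
  ultimately show ?thesis
    unfolding cyclically_orderable_def by blast
qed

end
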